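(* Let $a,b,c,d>0$ and let $G_B:\mathbb R^2\to\mathbb R^2$ be given by $G_B(0)=0$ and $G_B(u)=\frac{1}{|u|}\big((au_1^2+bu_2^2)u_1,\ (cu_1^2+du_2^2)u_2\big)$ for $u\neq0$. If $$\max\{a+c,b+d\}+2\sqrt{\max\{a,b\}}\sqrt{\max\{c,d\}}\le 2(b+c+2\sqrt{ad})$$ and $$2(b+c-2\sqrt{ad})\le\min\{a+c,b+d\}+2\sqrt{\min\{a,b\}}\sqrt{\min\{c,d\}},$$ then $G_B$ is monotone. If both inequalities are strict, then $G_B$ is $3$-monotone.
   Context: A map $F:\mathbb R^n\to\mathbb R^n$ is monotone if $(F(u)-F(v))\cdot(u-v)\ge0$ for all $u,v$; for $\alpha>0$ it is $\alpha$-monotone if there is $C>0$ with $(F(u)-F(v))\cdot(u-v)\ge C|u-v|^\alpha$ for all $u,v\in\mathbb R^n$. $|\cdot|$ is the Euclidean norm. *)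

theory Defs
  imports "HOL-Analysis.Analysis"
begin

definition monotone_map :: "('a::real_inner \<Rightarrow> 'a) \<Rightarrow> bool" where
  "monotone_map F \<longleftrightarrow> (\<forall>u v. (F u - F v) \<bullet> (u - v) \<ge> 0)"

definition alpha_monotone :: "real \<Rightarrow> ('a::real_inner \<Rightarrow> 'a) \<Rightarrow> bool" where
  "alpha_monotone \<alpha> F \<longleftrightarrow>
     (\<exists>C>0. \<forall>u v. (F u - F v) \<bullet> (u - v) \<ge> C * norm (u - v) powr \<alpha>)"

definition G_B :: "real \<Rightarrow> real \<Rightarrow> real \<Rightarrow> real \<Rightarrow> real^2 \<Rightarrow> real^2" where
  "G_B a b c d u = (if u = 0 then 0 else
     (1 / norm u) *\<^sub>R vector [(a * (u$1)^2 + b * (u$2)^2) * u$1,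
                               (c * (u$1)^2 + d * (u$2)^2) * u$2])"

end

theory Submission
  imports Defs
begin

text \<open>
  \<open>G_B\<close> is smooth off the origin and positively homogeneous of degree 2. For \<open>z \<noteq> 0\<close>,
  \<open>|z|\<^sup>3 \<langle>DG_B(z) w, w\<rangle> = P\<^sub>1 w\<^sub>1\<^sup>2 + T z\<^sub>1 z\<^sub>2 w\<^sub>1 w\<^sub>2 + P\<^sub>2 w\<^sub>2\<^sup>2\<close> with coefficients quartic in \<open>z\<close>.
  By AM-GM, \<open>(z\<^sub>1 z\<^sub>2 K)\<^sup>2 \<le> 4 P\<^sub>1 P\<^sub>2\<close> for \<open>K = 2 \<surd>(\<alpha>\<gamma>) + 4 |z|\<^sup>2 \<surd>(ad)\<close>, where
  \<open>\<alpha> = a z\<^sub>1\<^sup>2 + b z\<^sub>2\<^sup>2\<close> and \<open>\<gamma> = c z\<^sub>1\<^sup>2 + d z\<^sub>2\<^sup>2\<close>; the two hypotheses, applied to the convex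
  combinations \<open>\<alpha>, \<gamma>, \<alpha> + \<gamma>\<close>, say that \<open>|T| \<le> K\<close> (with a fixed margin if they are strict).
  Hence \<open>\<langle>DG_B(z) w, w\<rangle> \<ge> \<lambda> |z| |w|\<^sup>2\<close>, with \<open>\<lambda> > 0\<close> in the strict case.
  Along a segment \<open>z(t) = v + t w\<close> avoiding 0 this is integrated against \<open>h(\<langle>z(t), w\<rangle>)\<close>,
  \<open>h(x) = x |x|\<close>: by Cauchy-Schwarz \<open>\<lambda> |w| |\<langle>z, w\<rangle>| \<le> \<lambda> |z| |w|\<^sup>2\<close>, and
  \<open>h(x + k) - h(x) \<ge> k\<^sup>2/2\<close> yields \<open>\<langle>G_B u - G_B v, u - v\<rangle> \<ge> \<lambda> |u - v|\<^sup>3 / 4\<close>.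
  Segments through the origin reduce by homogeneity to \<open>\<langle>DG_B(w) w, w\<rangle> = 2 \<langle>G_B w, w\<rangle>\<close>.
\<close>

definition GB_coord_inner :: "real \<Rightarrow> real \<Rightarrow> real \<Rightarrow> real \<Rightarrow> real \<Rightarrow> real \<Rightarrow> real \<Rightarrow> real \<Rightarrow> real" where
  "GB_coord_inner a b c d z1 z2 w1 w2 =
     ((a*z1^2 + b*z2^2)*z1*w1 + (c*z1^2 + d*z2^2)*z2*w2) / sqrt (z1^2 + z2^2)"

text \<open>For \<open>z \<noteq> 0\<close> this is \<open>|z|\<^sup>3 \<langle>DG_B(z) w, w\<rangle>\<close>.\<close>

definition GB_jacobian_form :: "real \<Rightarrow> real \<Rightarrow> real \<Rightarrow> real \<Rightarrow> real \<Rightarrow> real \<Rightarrow> real \<Rightarrow> real \<Rightarrow> real" where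
  "GB_jacobian_form a b c d z1 z2 w1 w2 =
       ((a*z1^2 + b*z2^2)*z2^2 + 2*a*(z1^2 + z2^2)*z1^2)*w1^2
     + (2*(z1^2 + z2^2)*(b + c) - (a*z1^2 + b*z2^2) - (c*z1^2 + d*z2^2))*(z1*z2)*w1*w2
     + ((c*z1^2 + d*z2^2)*z1^2 + 2*d*(z1^2 + z2^2)*z2^2)*w2^2"

lemma norm_real2: "norm (u :: real^2) = sqrt ((u$1)^2 + (u$2)^2)"
  by (simp add: norm_eq_sqrt_inner inner_vec_def sum_2 power2_eq_square)

lemma GB_inner_eq: "G_B a b c d u \<bullet> w = GB_coord_inner a b c d (u$1) (u$2) (w$1) (w$2)"
  by (auto simp: G_B_def GB_coord_inner_def inner_vec_def sum_2 norm_real2 algebra_simps divide_inverse)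

lemma weighted_sum_between_min_max:
  fixes p q X Y :: real
  assumes "X \<ge> 0" "Y \<ge> 0"
  shows "min p q * (X + Y) \<le> p * X + q * Y" "p * X + q * Y \<le> max p q * (X + Y)"
proof -
  have "min p q * X \<le> p * X" "min p q * Y \<le> q * Y" "p * X \<le> max p q * X" "q * Y \<le> max p q * Y"
    using assms by (auto intro: mult_right_mono)
  then show "min p q * (X + Y) \<le> p * X + q * Y" "p * X + q * Y \<le> max p q * (X + Y)"
    by (simp_all add: distrib_left)
qed

lemma sqrt_weighted_products_between:
  fixes a b c d X Y :: real
  assumes "min a b \<ge> 0" "min c d \<ge> 0" "X \<ge> 0" "Y \<ge> 0"
  shows "sqrt (min a b) * sqrt (min c d) * (X + Y) \<le> sqrt ((a*X + b*Y) * (c*X + d*Y))"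
    and "sqrt ((a*X + b*Y) * (c*X + d*Y)) \<le> sqrt (max a b) * sqrt (max c d) * (X + Y)"
proof -
  note ab = weighted_sum_between_min_max[OF assms(3,4), of a b]
  note cd = weighted_sum_between_min_max[OF assms(3,4), of c d]
  have "X + Y \<ge> 0" using assms by simp
  have "(min a b * (X + Y)) * (min c d * (X + Y)) \<le> (a*X + b*Y) * (c*X + d*Y)"
    using ab(1) cd(1) assms by (intro mult_mono) auto
  then have "sqrt (min a b * min c d * (X + Y)^2) \<le> sqrt ((a*X + b*Y) * (c*X + d*Y))"
    by (intro real_sqrt_le_mono) (simp add: power2_eq_square algebra_simps)
  then show "sqrt (min a b) * sqrt (min c d) * (X + Y) \<le> sqrt ((a*X + b*Y) * (c*X + d*Y))"
    by (simp add: real_sqrt_mult abs_of_nonneg \<open>X + Y \<ge> 0\<close>)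
  have "(a*X + b*Y) * (c*X + d*Y) \<le> (max a b * (X + Y)) * (max c d * (X + Y))"
    using ab cd assms by (intro mult_mono) (auto intro: order_trans[OF _ ab(1)])
  then have "sqrt ((a*X + b*Y) * (c*X + d*Y)) \<le> sqrt (max a b * max c d * (X + Y)^2)"
    by (intro real_sqrt_le_mono) (simp add: power2_eq_square algebra_simps)
  then show "sqrt ((a*X + b*Y) * (c*X + d*Y)) \<le> sqrt (max a b) * sqrt (max c d) * (X + Y)"
    by (simp add: real_sqrt_mult abs_of_nonneg \<open>X + Y \<ge> 0\<close>)
qed

lemma two_sqrt_mult_le_sum_squares:
  fixes p q x y :: real
  assumes "p \<ge> 0" "q \<ge> 0"
  shows "2 * sqrt (p * q) * x * y \<le> p * x^2 + q * y^2"
proof -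
  have "p * x^2 + q * y^2 - 2 * sqrt (p * q) * x * y = (sqrt p * x - sqrt q * y)^2"
    using assms by (simp add: power2_eq_square real_sqrt_mult algebra_simps)
  then show ?thesis
    by (metis diff_ge_0_iff_ge zero_le_power2)
qed

lemma quadratic_form_ge_scaled_diagonal:
  fixes P1 P2 K \<beta> \<zeta> r x y :: real
  assumes "P1 \<ge> 0" "P2 \<ge> 0" "r \<ge> 0"
    and cross: "\<bar>\<beta>\<bar> \<le> r * K" and diag: "\<zeta>^2 * K^2 \<le> 4 * P1 * P2"
  shows "(1 - r) * (P1 * x^2 + P2 * y^2) \<le> P1 * x^2 + \<beta> * \<zeta> * x * y + P2 * y^2"
proof -
  define A where "A = P1 * x^2 + P2 * y^2"
  have "A \<ge> 0" using assms by (simp add: A_def)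
  have "\<beta>^2 \<le> (r * K)^2"
    using cross abs_le_square_iff[of \<beta> "r * K"] by simp
  then have "(\<beta> * \<zeta>)^2 \<le> (r * K)^2 * \<zeta>^2"
    by (simp add: power_mult_distrib mult_right_mono)
  also have "\<dots> = r^2 * (\<zeta>^2 * K^2)" by (simp add: power_mult_distrib)
  also have "\<dots> \<le> r^2 * (4 * P1 * P2)"
    using diag by (rule mult_left_mono) simp
  finally have "(\<beta> * \<zeta> * x * y)^2 \<le> r^2 * (4 * (P1 * x^2) * (P2 * y^2))"
    using mult_right_mono[of _ _ "x^2 * y^2"] by (fastforce simp: power_mult_distrib algebra_simps)
  also have "\<dots> \<le> (r * A)^2"
  proof -
    have "A^2 - 4 * (P1 * x^2) * (P2 * y^2) = (P1 * x^2 - P2 * y^2)^2"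
      by (simp add: A_def power2_eq_square algebra_simps)
    then have "4 * (P1 * x^2) * (P2 * y^2) \<le> A^2" by (metis diff_ge_0_iff_ge zero_le_power2)
    then show ?thesis by (simp add: power_mult_distrib mult_left_mono)
  qed
  finally have "\<bar>\<beta> * \<zeta> * x * y\<bar> \<le> \<bar>r * A\<bar>"
    by (simp only: abs_le_square_iff)
  then have "\<bar>\<beta> * \<zeta> * x * y\<bar> \<le> r * A"
    using \<open>A \<ge> 0\<close> \<open>r \<ge> 0\<close> by simp
  then show ?thesis
    by (simp add: A_def algebra_simps abs_le_iff)
qed

lemma GB_cross_coefficient_bound:
  fixes a b c d e X Y :: real
  assumes pos: "a > 0" "b > 0" "c > 0" "d > 0" and "e \<ge> 0" and XY: "X \<ge> 0" "Y \<ge> 0"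
    and upper: "max (a + c) (b + d) + 2 * sqrt (max a b) * sqrt (max c d)
                  \<le> 2 * (b + c + 2 * sqrt (a * d)) - e"
    and lower: "2 * (b + c - 2 * sqrt (a * d)) + e
                  \<le> min (a + c) (b + d) + 2 * sqrt (min a b) * sqrt (min c d)"
  shows "\<bar>2 * (X + Y) * (b + c) - (a*X + b*Y) - (c*X + d*Y)\<bar>
           \<le> (1 - e / (2 * sqrt (max a b) * sqrt (max c d) + 4 * sqrt (a * d)))
               * (2 * sqrt ((a*X + b*Y) * (c*X + d*Y)) + 4 * (X + Y) * sqrt (a * d))"
proof -
  define S where "S = (a*X + b*Y) + (c*X + d*Y)"
  define g where "g = sqrt ((a*X + b*Y) * (c*X + d*Y))"
  define Km where "Km = 2 * sqrt (max a b) * sqrt (max c d) + 4 * sqrt (a * d)"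
  have "S = (a + c) * X + (b + d) * Y" by (simp add: S_def algebra_simps)
  then have S: "min (a + c) (b + d) * (X + Y) \<le> S" "S \<le> max (a + c) (b + d) * (X + Y)"
    using weighted_sum_between_min_max[OF XY] by auto
  note g = sqrt_weighted_products_between[OF _ _ XY, of a b c d, folded g_def]
  have "X + Y \<ge> 0" "g \<ge> 0" using pos XY by (simp_all add: g_def)
  have "S + 2 * g \<le> (max (a + c) (b + d) + 2 * sqrt (max a b) * sqrt (max c d)) * (X + Y)"
    using S(2) g(2) pos by (simp add: algebra_simps)
  also have "\<dots> \<le> (2 * (b + c + 2 * sqrt (a * d)) - e) * (X + Y)"
    using upper \<open>X + Y \<ge> 0\<close> by (rule mult_right_mono)
  finally have hi: "S + 2 * g \<le> (2 * (b + c + 2 * sqrt (a * d)) - e) * (X + Y)" .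
  have "(2 * (b + c - 2 * sqrt (a * d)) + e) * (X + Y)
          \<le> (min (a + c) (b + d) + 2 * sqrt (min a b) * sqrt (min c d)) * (X + Y)"
    using lower \<open>X + Y \<ge> 0\<close> by (rule mult_right_mono)
  also have "\<dots> \<le> S + 2 * g"
    using S(1) g(1) pos by (simp add: algebra_simps)
  finally have lo: "(2 * (b + c - 2 * sqrt (a * d)) + e) * (X + Y) \<le> S + 2 * g" .
  have "Km > 0" using pos by (simp add: Km_def add_nonneg_pos)
  have "2 * g + 4 * (X + Y) * sqrt (a * d) \<le> Km * (X + Y)"
    using g(2) pos by (simp add: Km_def algebra_simps)
  then have "e / Km * (2 * g + 4 * (X + Y) * sqrt (a * d)) \<le> e / Km * (Km * (X + Y))"
    using \<open>Km > 0\<close> \<open>e \<ge> 0\<close> by (intro mult_left_mono) simp_all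
  also have "\<dots> = e * (X + Y)" using \<open>Km > 0\<close> by simp
  finally have "e / Km * (2 * g + 4 * (X + Y) * sqrt (a * d)) \<le> e * (X + Y)" .
  with hi lo \<open>g \<ge> 0\<close> show ?thesis
    unfolding g_def[symmetric] Km_def[symmetric] S_def by (simp add: abs_le_iff algebra_simps)
qed

lemma GB_diagonal_coefficients_product:
  fixes a d \<alpha> \<gamma> X Y R :: real
  assumes "a \<ge> 0" "d \<ge> 0" "\<alpha> \<ge> 0" "\<gamma> \<ge> 0" "R \<ge> 0"
  shows "X * Y * (2 * sqrt (\<alpha> * \<gamma>) + 4 * R * sqrt (a * d))^2
           \<le> 4 * (\<alpha> * Y + 2 * a * R * X) * (\<gamma> * X + 2 * d * R * Y)"
proof -
  have "2 * (sqrt (a * d) * sqrt (\<alpha> * \<gamma>)) * Y * X \<le> d * \<alpha> * Y^2 + a * \<gamma> * X^2"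
    using two_sqrt_mult_le_sum_squares[of "d * \<alpha>" "a * \<gamma>" Y X] assms
    by (simp add: real_sqrt_mult[symmetric] algebra_simps)
  moreover have "sqrt (\<alpha> * \<gamma>)^2 = \<alpha> * \<gamma>" "sqrt (a * d)^2 = a * d"
    using assms by simp_all
  then have "4 * (\<alpha> * Y + 2 * a * R * X) * (\<gamma> * X + 2 * d * R * Y)
               - X * Y * (2 * sqrt (\<alpha> * \<gamma>) + 4 * R * sqrt (a * d))^2
             = 8 * R * (d * \<alpha> * Y^2 + a * \<gamma> * X^2 - 2 * (sqrt (a * d) * sqrt (\<alpha> * \<gamma>)) * Y * X)"
    by (simp add: power2_eq_square algebra_simps)
  ultimately show ?thesis
    using \<open>R \<ge> 0\<close> by (metis diff_ge_0_iff_ge mult_nonneg_nonneg zero_le_numeral)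
qed

lemma GB_diagonal_coefficients_ge:
  fixes a b c d X Y :: real
  assumes "a > 0" "b > 0" "c > 0" "d > 0" "X \<ge> 0" "Y \<ge> 0"
  shows "min (min a b) (min c d) * (X + Y)^2 \<le> (a*X + b*Y) * Y + 2 * a * (X + Y) * X"
    and "min (min a b) (min c d) * (X + Y)^2 \<le> (c*X + d*Y) * X + 2 * d * (X + Y) * Y"
proof -
  define \<mu> where "\<mu> = min (min a b) (min c d)"
  have \<mu>: "\<mu> \<le> a" "\<mu> \<le> b" "\<mu> \<le> c" "\<mu> \<le> d" by (auto simp: \<mu>_def)
  have "0 \<le> (2*a - \<mu>) * X^2" "0 \<le> (3*a - 2*\<mu>) * (X * Y)" "0 \<le> (b - \<mu>) * Y^2"
       "0 \<le> (2*d - \<mu>) * Y^2" "0 \<le> (3*d - 2*\<mu>) * (X * Y)" "0 \<le> (c - \<mu>) * X^2"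
    using \<mu> assms by simp_all
  then show "\<mu> * (X + Y)^2 \<le> (a*X + b*Y) * Y + 2 * a * (X + Y) * X"
    and "\<mu> * (X + Y)^2 \<le> (c*X + d*Y) * X + 2 * d * (X + Y) * Y"
    by (simp_all add: power2_eq_square algebra_simps)
qed

lemma GB_jacobian_form_lower_bound:
  fixes a b c d e z1 z2 w1 w2 :: real
  assumes pos: "a > 0" "b > 0" "c > 0" "d > 0" and "e \<ge> 0"
    and upper: "max (a + c) (b + d) + 2 * sqrt (max a b) * sqrt (max c d)
                  \<le> 2 * (b + c + 2 * sqrt (a * d)) - e"
    and lower: "2 * (b + c - 2 * sqrt (a * d)) + e
                  \<le> min (a + c) (b + d) + 2 * sqrt (min a b) * sqrt (min c d)"
    and nonzero: "z1^2 + z2^2 > 0"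
  shows "e / (2 * sqrt (max a b) * sqrt (max c d) + 4 * sqrt (a * d)) * min (min a b) (min c d)
           * (z1^2 + z2^2)^2 * (w1^2 + w2^2) \<le> GB_jacobian_form a b c d z1 z2 w1 w2"
proof -
  define X Y R where "X = z1^2" and "Y = z2^2" and "R = z1^2 + z2^2"
  define \<alpha> \<gamma> where "\<alpha> = a*X + b*Y" and "\<gamma> = c*X + d*Y"
  define P1 P2 T where "P1 = \<alpha>*Y + 2*a*R*X" and "P2 = \<gamma>*X + 2*d*R*Y" and "T = 2*R*(b + c) - \<alpha> - \<gamma>"
  define K where "K = 2 * sqrt (\<alpha> * \<gamma>) + 4 * R * sqrt (a * d)"
  define s where "s = e / (2 * sqrt (max a b) * sqrt (max c d) + 4 * sqrt (a * d))"
  define \<mu> where "\<mu> = min (min a b) (min c d)"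
  have XY: "X \<ge> 0" "Y \<ge> 0" and R: "R = X + Y" "R > 0"
    using nonzero by (simp_all add: X_def Y_def R_def)
  have "\<alpha> \<ge> 0" "\<gamma> \<ge> 0"
    using pos XY by (simp_all add: \<alpha>_def \<gamma>_def)
  have cross: "\<bar>T\<bar> \<le> (1 - s) * K"
    using GB_cross_coefficient_bound[OF pos \<open>e \<ge> 0\<close> XY upper lower]
    by (simp add: T_def K_def s_def \<alpha>_def \<gamma>_def R)
  have diag: "(z1 * z2)^2 * K^2 \<le> 4 * P1 * P2"
    unfolding K_def P1_def P2_def power_mult_distrib X_def[symmetric] Y_def[symmetric]
    by (rule GB_diagonal_coefficients_product) (use pos \<open>\<alpha> \<ge> 0\<close> \<open>\<gamma> \<ge> 0\<close> R in auto)
  have P: "\<mu> * R^2 \<le> P1" "\<mu> * R^2 \<le> P2"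
    using GB_diagonal_coefficients_ge[OF pos XY] by (simp_all add: \<mu>_def P1_def P2_def \<alpha>_def \<gamma>_def R)
  then have "P1 \<ge> 0" "P2 \<ge> 0"
    using pos by (auto simp: \<mu>_def intro: order_trans[rotated])
  have "s \<ge> 0" using pos \<open>e \<ge> 0\<close> by (simp add: s_def)
  have "K > 0" using \<open>R > 0\<close> \<open>\<alpha> \<ge> 0\<close> \<open>\<gamma> \<ge> 0\<close> pos by (simp add: K_def add_nonneg_pos)
  with cross have "1 - s \<ge> 0" by (metis abs_ge_zero order_trans zero_le_mult_iff not_less)
  have "s * (\<mu> * R^2 * (w1^2 + w2^2)) \<le> s * (P1 * w1^2 + P2 * w2^2)"
    using P \<open>s \<ge> 0\<close> by (intro mult_left_mono) (auto simp: distrib_left intro!: add_mono mult_right_mono)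
  also have "\<dots> \<le> P1 * w1^2 + T * (z1 * z2) * w1 * w2 + P2 * w2^2"
    using quadratic_form_ge_scaled_diagonal[OF \<open>P1 \<ge> 0\<close> \<open>P2 \<ge> 0\<close> \<open>1 - s \<ge> 0\<close> cross diag] by simp
  also have "\<dots> = GB_jacobian_form a b c d z1 z2 w1 w2"
    by (simp add: GB_jacobian_form_def P1_def P2_def T_def \<alpha>_def \<gamma>_def X_def Y_def R_def algebra_simps)
  finally show ?thesis by (simp add: s_def \<mu>_def R_def mult.assoc)
qed

lemma GB_coord_inner_has_derivative:
  fixes a b c d v1 v2 w1 w2 t :: real
  assumes nonzero: "(v1 + t*w1)^2 + (v2 + t*w2)^2 > 0"
  shows "((\<lambda>t. GB_coord_inner a b c d (v1 + t*w1) (v2 + t*w2) w1 w2) has_real_derivative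
           GB_jacobian_form a b c d (v1 + t*w1) (v2 + t*w2) w1 w2
             / sqrt ((v1 + t*w1)^2 + (v2 + t*w2)^2) ^ 3) (at t)"
proof -
  define z1 where "z1 = v1 + t*w1"
  define z2 where "z2 = v2 + t*w2"
  define N where "N = sqrt (z1^2 + z2^2)"
  define num where "num = (a*z1^2 + b*z2^2)*z1*w1 + (c*z1^2 + d*z2^2)*z2*w2"
  define num' where "num' = (3*a*z1^2 + b*z2^2)*w1^2 + 2*(b + c)*z1*z2*w1*w2 + (c*z1^2 + 3*d*z2^2)*w2^2"
  have N: "N > 0" "N^2 = z1^2 + z2^2" using nonzero by (auto simp: N_def z1_def z2_def)
  have dnum: "((\<lambda>t. (a*(v1 + t*w1)^2 + b*(v2 + t*w2)^2)*(v1 + t*w1)*w1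
              + (c*(v1 + t*w1)^2 + d*(v2 + t*w2)^2)*(v2 + t*w2)*w2) has_real_derivative num') (at t)"
    by (rule derivative_eq_intros refl | simp)+
       (simp add: num'_def z1_def z2_def power2_eq_square algebra_simps)
  have "((\<lambda>t. (v1 + t*w1)^2 + (v2 + t*w2)^2) has_real_derivative 2*(z1*w1 + z2*w2)) (at t)"
    by (rule derivative_eq_intros refl | simp)+ (simp add: z1_def z2_def algebra_simps)
  from DERIV_chain2[OF DERIV_real_sqrt[OF nonzero] this]
  have dden: "((\<lambda>t. sqrt ((v1 + t*w1)^2 + (v2 + t*w2)^2)) has_real_derivative
          inverse N / 2 * (2*(z1*w1 + z2*w2))) (at t)"
    unfolding N_def z1_def z2_def by (simp add: o_def)
  have "((\<lambda>t. GB_coord_inner a b c d (v1 + t*w1) (v2 + t*w2) w1 w2) has_real_derivative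
      (num' * N - num * (inverse N / 2 * (2*(z1*w1 + z2*w2)))) / (N * N)) (at t)"
    unfolding GB_coord_inner_def num_def N_def z1_def z2_def
    by (rule DERIV_divide[OF dnum dden[unfolded N_def z1_def z2_def]])
       (use N(1)[unfolded N_def z1_def z2_def] in linarith)
  also have "(num' * N - num * (inverse N / 2 * (2*(z1*w1 + z2*w2)))) / (N * N)
               = (num' * N^2 - num * (z1*w1 + z2*w2)) / N^3"
    using N(1) by (simp add: field_simps power2_eq_square power3_eq_cube)
  also have "num' * N^2 - num * (z1*w1 + z2*w2) = GB_jacobian_form a b c d z1 z2 w1 w2"
    unfolding GB_jacobian_form_def num_def num'_def N(2) by (simp add: power2_eq_square algebra_simps)
  finally show ?thesis
    by (simp add: N_def z1_def z2_def)
qed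

lemma has_real_derivative_mult_abs: "((\<lambda>x::real. x * \<bar>x\<bar>) has_real_derivative 2 * \<bar>x\<bar>) (at x)"
proof (cases x "0::real" rule: linorder_cases)
  case less
  have "((\<lambda>x::real. -(x^2)) has_real_derivative 2 * \<bar>x\<bar>) (at x)"
    using less by (auto intro!: derivative_eq_intros)
  then show ?thesis
    by (rule has_field_derivative_transform_within_open[of _ _ _ "{..<0}"])
       (use less in \<open>auto simp: power2_eq_square\<close>)
next
  case equal
  have "((\<lambda>h::real. \<bar>h\<bar>) \<longlongrightarrow> 0) (at 0)"
    using tendsto_rabs_zero[OF tendsto_ident_at[of "0::real" UNIV]] by simp
  then show ?thesis
    using equal by (simp add: DERIV_def cong: Lim_cong_within)
next
  case greater
  have "((\<lambda>x::real. x^2) has_real_derivative 2 * \<bar>x\<bar>) (at x)"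
    using greater by (auto intro!: derivative_eq_intros)
  then show ?thesis
    by (rule has_field_derivative_transform_within_open[of _ _ _ "{0<..}"])
       (use greater in \<open>auto simp: power2_eq_square\<close>)
qed

lemma has_real_derivative_mult_abs_affine:
  fixes p q t :: real
  shows "((\<lambda>t. (p + t * q) * \<bar>p + t * q\<bar>) has_real_derivative 2 * \<bar>p + t * q\<bar> * q) (at t)"
proof -
  have "((\<lambda>t. p + t * q) has_real_derivative q) (at t)"
    by (auto intro!: derivative_eq_intros)
  from DERIV_chain2[OF has_real_derivative_mult_abs this] show ?thesis
    by (simp add: o_def)
qed

lemma mult_abs_increment_ge:
  fixes s k :: real
  assumes "k \<ge> 0"
  shows "k^2 / 2 \<le> (s + k) * \<bar>s + k\<bar> - s * \<bar>s\<bar>"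
proof (cases "s + k \<ge> 0")
  case True
  have "k^2 / 2 \<le> (s + k)^2 + s^2" if "s < 0"
    using zero_le_power2[of "k + 2 * s"] that by (simp add: power2_eq_square algebra_simps)
  moreover have "k^2 / 2 \<le> (s + k)^2 - s^2" if "s \<ge> 0"
    using that assms by (simp add: power2_eq_square algebra_simps)
  ultimately show ?thesis
    using True by (cases "s \<ge> 0") (auto simp: power2_eq_square abs_if algebra_simps)
next
  case False
  have "k * (2 * s + 3 / 2 * k) \<le> 0"
    using False assms by (intro mult_nonneg_nonpos) auto
  moreover have "s < 0" using False assms by simp
  ultimately show ?thesis
    using False by (simp add: power2_eq_square algebra_simps)
qed

lemma abs_dot2_le: "\<bar>z1 * w1 + z2 * w2\<bar> \<le> sqrt (z1^2 + z2^2) * sqrt (w1^2 + w2^2)"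
proof -
  have "(z1^2 + z2^2) * (w1^2 + w2^2) - (z1 * w1 + z2 * w2)^2 = (z1 * w2 - z2 * w1)^2"
    by (simp add: power2_eq_square algebra_simps)
  then have "(z1 * w1 + z2 * w2)^2 \<le> (z1^2 + z2^2) * (w1^2 + w2^2)"
    by (metis diff_ge_0_iff_ge zero_le_power2)
  then show ?thesis
    by (metis real_sqrt_abs real_sqrt_le_mono real_sqrt_mult)
qed

lemma abs_dot2_le_div_cube:
  fixes lam Q z1 z2 w1 w2 :: real
  assumes "lam \<ge> 0" "z1^2 + z2^2 > 0" "lam * (z1^2 + z2^2)^2 * (w1^2 + w2^2) \<le> Q"
  shows "lam * sqrt (w1^2 + w2^2) * \<bar>z1 * w1 + z2 * w2\<bar> \<le> Q / sqrt (z1^2 + z2^2)^3"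
proof -
  define N L where "N = sqrt (z1^2 + z2^2)" and "L = sqrt (w1^2 + w2^2)"
  have "N > 0" "N^2 = z1^2 + z2^2" "L^2 = w1^2 + w2^2"
    using assms(2) by (simp_all add: N_def L_def)
  have "lam * L * \<bar>z1 * w1 + z2 * w2\<bar> \<le> lam * L * (N * L)"
    using abs_dot2_le[of z1 w1 z2 w2] \<open>lam \<ge> 0\<close> by (intro mult_left_mono) (simp_all add: N_def L_def)
  also have "\<dots> = lam * (N^2)^2 * L^2 / N^3"
    using \<open>N > 0\<close> by (simp add: field_simps power2_eq_square power3_eq_cube)
  also have "\<dots> \<le> Q / N^3"
    using assms(3) \<open>N > 0\<close> unfolding \<open>N^2 = z1^2 + z2^2\<close> \<open>L^2 = w1^2 + w2^2\<close>
    by (simp add: divide_right_mono)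
  finally show ?thesis by (simp add: N_def L_def)
qed

lemma GB_coord_inner_increment_ge:
  fixes a b c d lam v1 v2 w1 w2 :: real
  assumes "lam \<ge> 0"
    and form_ge: "\<And>z1 z2. z1^2 + z2^2 > 0 \<Longrightarrow>
           lam * (z1^2 + z2^2)^2 * (w1^2 + w2^2) \<le> GB_jacobian_form a b c d z1 z2 w1 w2"
    and avoids_0: "\<And>t. 0 \<le> t \<Longrightarrow> t \<le> 1 \<Longrightarrow> (v1 + t*w1)^2 + (v2 + t*w2)^2 > 0"
  shows "lam / 4 * sqrt (w1^2 + w2^2)^3
           \<le> GB_coord_inner a b c d (v1 + w1) (v2 + w2) w1 w2 - GB_coord_inner a b c d v1 v2 w1 w2"
proof (cases "w1^2 + w2^2 = 0")
  case True
  then show ?thesis by (simp add: GB_coord_inner_def)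
next
  case False
  define L2 where "L2 = w1^2 + w2^2"
  define L where "L = sqrt L2"
  define \<sigma> where "\<sigma> = v1 * w1 + v2 * w2"
  have "L2 > 0" "L^2 = L2" using False by (simp_all add: L2_def L_def add_nonneg_nonneg less_le)
  define \<psi> where "\<psi> t = GB_coord_inner a b c d (v1 + t*w1) (v2 + t*w2) w1 w2
                           - lam * L / (2 * L2) * ((\<sigma> + t * L2) * \<bar>\<sigma> + t * L2\<bar>)" for t
  have nonneg_deriv: "\<exists>y. (\<psi> has_real_derivative y) (at t) \<and> 0 \<le> y" if "0 \<le> t" "t \<le> 1" for t
  proof -
    define z1 z2 where "z1 = v1 + t*w1" and "z2 = v2 + t*w2"
    have "z1^2 + z2^2 > 0" using avoids_0[OF that] by (simp add: z1_def z2_def)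
    from DERIV_diff[OF GB_coord_inner_has_derivative
                       DERIV_cmult[OF has_real_derivative_mult_abs_affine[of \<sigma> L2 t], of "lam * L / (2 * L2)"]]
    have deriv: "(\<psi> has_real_derivative GB_jacobian_form a b c d z1 z2 w1 w2 / sqrt (z1^2 + z2^2)^3
                   - lam * L / (2 * L2) * (2 * \<bar>\<sigma> + t * L2\<bar> * L2)) (at t)"
      using avoids_0[OF that] unfolding \<psi>_def[abs_def] z1_def z2_def by simp
    have "\<sigma> + t * L2 = z1 * w1 + z2 * w2"
      by (simp add: \<sigma>_def L2_def z1_def z2_def power2_eq_square algebra_simps)
    then have "lam * L / (2 * L2) * (2 * \<bar>\<sigma> + t * L2\<bar> * L2) = lam * L * \<bar>z1 * w1 + z2 * w2\<bar>"
      using \<open>L2 > 0\<close> by simp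
    also have "\<dots> \<le> GB_jacobian_form a b c d z1 z2 w1 w2 / sqrt (z1^2 + z2^2)^3"
      using abs_dot2_le_div_cube[OF \<open>lam \<ge> 0\<close> \<open>z1^2 + z2^2 > 0\<close> form_ge[OF \<open>z1^2 + z2^2 > 0\<close>]]
      by (simp add: L_def L2_def)
    finally show ?thesis
      using deriv by auto
  qed
  have "lam / 4 * L^3 = lam * L / (2 * L2) * (L2^2 / 2)"
    using \<open>L2 > 0\<close> unfolding \<open>L^2 = L2\<close>[symmetric] by (simp add: field_simps power2_eq_square power3_eq_cube)
  also have "\<dots> \<le> lam * L / (2 * L2) * ((\<sigma> + L2) * \<bar>\<sigma> + L2\<bar> - \<sigma> * \<bar>\<sigma>\<bar>)"
    using mult_abs_increment_ge[of L2 \<sigma>] \<open>L2 > 0\<close> \<open>lam \<ge> 0\<close> by (intro mult_left_mono) (simp_all add: L_def)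
  also have "\<dots> \<le> \<psi> 1 - \<psi> 0 + lam * L / (2 * L2) * ((\<sigma> + L2) * \<bar>\<sigma> + L2\<bar> - \<sigma> * \<bar>\<sigma>\<bar>)"
    using DERIV_nonneg_imp_nondecreasing[of 0 1 \<psi>, OF _ nonneg_deriv] by simp
  also have "\<dots> = GB_coord_inner a b c d (v1 + w1) (v2 + w2) w1 w2 - GB_coord_inner a b c d v1 v2 w1 w2"
    by (simp add: \<psi>_def algebra_simps)
  finally show ?thesis by (simp add: L_def L2_def)
qed

lemma GB_coord_inner_scale:
  "GB_coord_inner a b c d (s * w1) (s * w2) w1 w2 = s * \<bar>s\<bar> * GB_coord_inner a b c d w1 w2 w1 w2"
proof -
  define num where "num = (a*w1^2 + b*w2^2)*w1*w1 + (c*w1^2 + d*w2^2)*w2*w2"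
  define N where "N = sqrt (w1^2 + w2^2)"
  have "sqrt ((s * w1)^2 + (s * w2)^2) = \<bar>s\<bar> * N"
    by (simp add: N_def power_mult_distrib real_sqrt_mult distrib_left[symmetric])
  then have "GB_coord_inner a b c d (s * w1) (s * w2) w1 w2 = (s * \<bar>s\<bar>) * \<bar>s\<bar> * num / (\<bar>s\<bar> * N)"
    unfolding GB_coord_inner_def num_def by (simp add: power2_eq_square algebra_simps)
  also have "\<dots> = s * \<bar>s\<bar> * (num / N)"
    by (cases "s = 0") simp_all
  finally show ?thesis by (simp add: GB_coord_inner_def num_def N_def)
qed

lemma GB_jacobian_form_diagonal:
  "GB_jacobian_form a b c d w1 w2 w1 w2 = 2 * sqrt (w1^2 + w2^2)^3 * GB_coord_inner a b c d w1 w2 w1 w2"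
proof (cases "w1^2 + w2^2 = 0")
  case True
  then show ?thesis by (simp add: GB_jacobian_form_def GB_coord_inner_def)
next
  case False
  define R where "R = w1^2 + w2^2"
  define num where "num = (a*w1^2 + b*w2^2)*w1*w1 + (c*w1^2 + d*w2^2)*w2*w2"
  have "sqrt R > 0" using False by (simp add: R_def add_nonneg_nonneg less_le)
  have "GB_jacobian_form a b c d w1 w2 w1 w2 = 2 * R * num"
    by (simp add: GB_jacobian_form_def R_def num_def power2_eq_square algebra_simps)
  also have "\<dots> = 2 * (R * sqrt R) * (num / sqrt R)"
    using \<open>sqrt R > 0\<close> by simp
  also have "R * sqrt R = sqrt R^3"
    using False by (simp add: R_def power3_eq_cube)
  finally show ?thesis by (simp add: GB_coord_inner_def R_def num_def)
qed

lemma GB_coord_inner_diagonal_ge: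
  fixes lam w1 w2 :: real
  assumes "w1^2 + w2^2 > 0 \<Longrightarrow>
             lam * (w1^2 + w2^2)^2 * (w1^2 + w2^2) \<le> GB_jacobian_form a b c d w1 w2 w1 w2"
  shows "lam / 2 * sqrt (w1^2 + w2^2)^3 \<le> GB_coord_inner a b c d w1 w2 w1 w2"
proof (cases "w1^2 + w2^2 = 0")
  case True
  then show ?thesis by (simp add: GB_coord_inner_def)
next
  case False
  define S where "S = sqrt (w1^2 + w2^2)"
  have "S > 0" using False by (simp add: S_def add_nonneg_nonneg less_le)
  have "(lam / 2 * S^3) * (2 * S^3) = lam * (w1^2 + w2^2)^2 * (w1^2 + w2^2)"
    using False by (simp add: S_def power2_eq_square power3_eq_cube)
  also have "\<dots> \<le> GB_coord_inner a b c d w1 w2 w1 w2 * (2 * S^3)"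
    using assms False GB_jacobian_form_diagonal[of a b c d w1 w2]
    by (simp add: S_def less_le add_nonneg_nonneg mult.commute)
  finally have "lam / 2 * S^3 \<le> GB_coord_inner a b c d w1 w2 w1 w2"
    by (rule mult_right_le_imp_le) (use \<open>S > 0\<close> in simp)
  then show ?thesis by (simp add: S_def)
qed

lemma GB_inner_increment_ge:
  fixes a b c d lam :: real and u v :: "real^2"
  assumes "lam \<ge> 0"
    and form_ge: "\<And>z1 z2 w1 w2. z1^2 + z2^2 > 0 \<Longrightarrow>
           lam * (z1^2 + z2^2)^2 * (w1^2 + w2^2) \<le> GB_jacobian_form a b c d z1 z2 w1 w2"
  shows "lam / 4 * norm (u - v)^3 \<le> (G_B a b c d u - G_B a b c d v) \<bullet> (u - v)"
proof -
  define v1 v2 w1 w2 where "v1 = v$1" and "v2 = v$2" and "w1 = (u - v)$1" and "w2 = (u - v)$2"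
  have inner: "(G_B a b c d u - G_B a b c d v) \<bullet> (u - v)
      = GB_coord_inner a b c d (v1 + w1) (v2 + w2) w1 w2 - GB_coord_inner a b c d v1 v2 w1 w2"
    by (simp add: inner_diff_left GB_inner_eq v1_def v2_def w1_def w2_def)
  have norm: "norm (u - v) = sqrt (w1^2 + w2^2)"
    by (simp add: norm_real2 w1_def w2_def)
  show ?thesis
  proof (cases "\<exists>t. 0 \<le> t \<and> t \<le> 1 \<and> v1 + t*w1 = 0 \<and> v2 + t*w2 = 0")
    case False
    then have avoids_0: "(v1 + t*w1)^2 + (v2 + t*w2)^2 > 0" if "0 \<le> t" "t \<le> 1" for t
      using that by (auto simp: sum_power2_gt_zero_iff)
    show ?thesis
      unfolding inner norm
      by (rule GB_coord_inner_increment_ge[OF \<open>lam \<ge> 0\<close>]) (simp_all add: form_ge avoids_0)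
  next
    case True
    then obtain t where t: "0 \<le> t" "t \<le> 1" "v1 = (- t) * w1" "v2 = (- t) * w2"
      by (auto simp: add_eq_0_iff)
    define P where "P = GB_coord_inner a b c d w1 w2 w1 w2"
    have P: "lam / 2 * sqrt (w1^2 + w2^2)^3 \<le> P"
      unfolding P_def by (rule GB_coord_inner_diagonal_ge) (use form_ge in simp)
    have "1 / 2 \<le> (1 - t)^2 + t^2"
      using zero_le_power2[of "2 * t - 1"] by (simp add: power2_eq_square algebra_simps)
    moreover have "0 \<le> lam / 2 * sqrt (w1^2 + w2^2)^3" using \<open>lam \<ge> 0\<close> by simp
    ultimately have "1 / 2 * (lam / 2 * sqrt (w1^2 + w2^2)^3) \<le> ((1 - t)^2 + t^2) * P"
      using P by (intro mult_mono) auto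
    also have "\<dots> = (1 - t) * \<bar>1 - t\<bar> * P - (- t) * \<bar>- t\<bar> * P"
      using t by (simp add: power2_eq_square algebra_simps)
    also have "\<dots> = GB_coord_inner a b c d (v1 + w1) (v2 + w2) w1 w2 - GB_coord_inner a b c d v1 v2 w1 w2"
      using GB_coord_inner_scale[of a b c d "1 - t" w1 w2] GB_coord_inner_scale[of a b c d "- t" w1 w2]
      by (simp add: P_def t algebra_simps)
    finally show ?thesis
      unfolding inner norm by simp
  qed
qed

lemma GB_inner_increment_ge_slack:
  fixes a b c d e :: real and u v :: "real^2"
  assumes pos: "a > 0" "b > 0" "c > 0" "d > 0" and "e \<ge> 0"
    and upper: "max (a + c) (b + d) + 2 * sqrt (max a b) * sqrt (max c d)
                  \<le> 2 * (b + c + 2 * sqrt (a * d)) - e"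
    and lower: "2 * (b + c - 2 * sqrt (a * d)) + e
                  \<le> min (a + c) (b + d) + 2 * sqrt (min a b) * sqrt (min c d)"
  shows "e / (2 * sqrt (max a b) * sqrt (max c d) + 4 * sqrt (a * d)) * min (min a b) (min c d) / 4
           * norm (u - v)^3 \<le> (G_B a b c d u - G_B a b c d v) \<bullet> (u - v)"
proof (rule GB_inner_increment_ge)
  show "0 \<le> e / (2 * sqrt (max a b) * sqrt (max c d) + 4 * sqrt (a * d)) * min (min a b) (min c d)"
    using pos \<open>e \<ge> 0\<close> by simp
qed (erule GB_jacobian_form_lower_bound[OF assms])

lemma GB_monotone_map:
  fixes a b c d :: real
  assumes pos: "a > 0" "b > 0" "c > 0" "d > 0"
    and "max (a + c) (b + d) + 2 * sqrt (max a b) * sqrt (max c d) \<le> 2 * (b + c + 2 * sqrt (a * d))"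
    and "2 * (b + c - 2 * sqrt (a * d)) \<le> min (a + c) (b + d) + 2 * sqrt (min a b) * sqrt (min c d)"
  shows "monotone_map (G_B a b c d)"
  using GB_inner_increment_ge_slack[OF pos, of 0] assms(5,6) by (simp add: monotone_map_def)

lemma GB_alpha_monotone_3:
  fixes a b c d :: real
  assumes pos: "a > 0" "b > 0" "c > 0" "d > 0"
    and "max (a + c) (b + d) + 2 * sqrt (max a b) * sqrt (max c d) < 2 * (b + c + 2 * sqrt (a * d))"
    and "2 * (b + c - 2 * sqrt (a * d)) < min (a + c) (b + d) + 2 * sqrt (min a b) * sqrt (min c d)"
  shows "alpha_monotone 3 (G_B a b c d)"
proof -
  define e where "e = min
      (2 * (b + c + 2 * sqrt (a * d)) - (max (a + c) (b + d) + 2 * sqrt (max a b) * sqrt (max c d)))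
      (min (a + c) (b + d) + 2 * sqrt (min a b) * sqrt (min c d) - 2 * (b + c - 2 * sqrt (a * d)))"
  define C where
    "C = e / (2 * sqrt (max a b) * sqrt (max c d) + 4 * sqrt (a * d)) * min (min a b) (min c d) / 4"
  have "e > 0" using assms(5,6) by (simp add: e_def)
  have upper: "max (a + c) (b + d) + 2 * sqrt (max a b) * sqrt (max c d)
                 \<le> 2 * (b + c + 2 * sqrt (a * d)) - e"
    and lower: "2 * (b + c - 2 * sqrt (a * d)) + e
                 \<le> min (a + c) (b + d) + 2 * sqrt (min a b) * sqrt (min c d)"
    by (simp_all add: e_def min_def)
  have "C * norm (u - v) powr 3 \<le> (G_B a b c d u - G_B a b c d v) \<bullet> (u - v)" for u v
    using GB_inner_increment_ge_slack[OF pos less_imp_le[OF \<open>e > 0\<close>] upper lower, of u v]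
    by (simp add: C_def powr_numeral)
  moreover have "C > 0"
    using \<open>e > 0\<close> pos by (simp add: C_def add_nonneg_pos)
  ultimately show ?thesis
    unfolding alpha_monotone_def by blast
qed

theorem mainTheorem5:
  fixes a b c d :: real
  assumes "a > 0" "b > 0" "c > 0" "d > 0"
  shows "(max (a + c) (b + d) + 2 * sqrt (max a b) * sqrt (max c d) \<le> 2 * (b + c + 2 * sqrt (a * d))
          \<and> 2 * (b + c - 2 * sqrt (a * d)) \<le> min (a + c) (b + d) + 2 * sqrt (min a b) * sqrt (min c d)
          \<longrightarrow> monotone_map (G_B a b c d))
       \<and> (max (a + c) (b + d) + 2 * sqrt (max a b) * sqrt (max c d) < 2 * (b + c + 2 * sqrt (a * d))
          \<and> 2 * (b + c - 2 * sqrt (a * d)) < min (a + c) (b + d) + 2 * sqrt (min a b) * sqrt (min c d)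
          \<longrightarrow> alpha_monotone 3 (G_B a b c d))"
  using GB_monotone_map[OF assms] GB_alpha_monotone_3[OF assms] by blast

end
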